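(* If $G$ is a connected graph with $|V(G)| = n > 1$, then some value occurs at least $\left\lceil 2n/\tau(G) \right\rceil$ times in the detour sequence of $G$ (that is, the detour sequence of $G$ has a repetition of length at least $\lceil 2n/\tau(G)\rceil$).
   Context: All graphs are finite and simple. The order of a path is its number of vertices. For a vertex $v$ of $G$, $\tau(v)$ is the order of a longest path in $G$ having $v$ as an endvertex, and $\tau(G)=\max_v \tau(v)$ is the order of a longest path in $G$. The detour sequence of $G$ is the nondecreasing sequence of the values $\tau(v)$, $v\in V(G)$ (one term per vertex). A repetition in a nondecreasing sequence is a maximal block of at least two consecutive equal terms; its length is the number of terms in the block. *)

theory Defs
  imports Complex_Main
begin

definition simple_graph :: "'a set \<Rightarrow> ('a \<Rightarrow> 'a \<Rightarrow> bool) \<Rightarrow> bool" where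
  "simple_graph V E \<longleftrightarrow> finite V \<and> (\<forall>x y. E x y \<longrightarrow> x \<in> V \<and> y \<in> V)
     \<and> (\<forall>x y. E x y \<longrightarrow> E y x) \<and> (\<forall>x. \<not> E x x)"

text \<open>A path is a nonempty list of distinct vertices, consecutive ones adjacent.
  Its order is its length (number of vertices).\<close>
definition is_path :: "'a set \<Rightarrow> ('a \<Rightarrow> 'a \<Rightarrow> bool) \<Rightarrow> 'a list \<Rightarrow> bool" where
  "is_path V E p \<longleftrightarrow> p \<noteq> [] \<and> distinct p \<and> set p \<subseteq> V
     \<and> (\<forall>i. Suc i < length p \<longrightarrow> E (p ! i) (p ! Suc i))"

definition connected_graph :: "'a set \<Rightarrow> ('a \<Rightarrow> 'a \<Rightarrow> bool) \<Rightarrow> bool" where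
  "connected_graph V E \<longleftrightarrow>
     (\<forall>u\<in>V. \<forall>w\<in>V. \<exists>p. is_path V E p \<and> hd p = u \<and> last p = w)"

definition tau :: "'a set \<Rightarrow> ('a \<Rightarrow> 'a \<Rightarrow> bool) \<Rightarrow> 'a \<Rightarrow> nat" where
  "tau V E v = Max {length p | p. is_path V E p \<and> (hd p = v \<or> last p = v)}"

definition tauG :: "'a set \<Rightarrow> ('a \<Rightarrow> 'a \<Rightarrow> bool) \<Rightarrow> nat" where
  "tauG V E = Max {length p | p. is_path V E p}"

end

(* Let P be a longest path, of order L = tau(G). A vertex P!i of P is an end of the
   subpaths P[0..i] and P[i..], so its tau is at least (L + 2)/2 unless L is odd and it is
   the middle vertex of P. A vertex v off P reaches P along a path a that meets P only after
   its last vertex, at some P!i; both a @ P[i..] and P[0..i] @ rev a are paths ending at v,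
   giving 2 tau(v) >= L + 3. So, apart from possibly the middle vertex, all tau-values lie
   among the L div 2 integers k with L + 2 <= 2k <= L, and by pigeonhole one of them is
   taken at least 2n/L times; in the odd case the lost middle vertex is absorbed by L <= n. *)

theory Submission
  imports Defs
begin

lemma is_path_iff_successively:
  "is_path V E p \<longleftrightarrow> p \<noteq> [] \<and> distinct p \<and> set p \<subseteq> V \<and> successively E p"
  by (simp add: is_path_def successively_conv_nth)

lemma is_path_append_iff:
  assumes "xs \<noteq> []" "ys \<noteq> []"
  shows "is_path V E (xs @ ys) \<longleftrightarrow>
    is_path V E xs \<and> is_path V E ys \<and> E (last xs) (hd ys) \<and> set xs \<inter> set ys = {}"
  using assms by (auto simp: is_path_iff_successively successively_append_iff)

lemma is_path_take: "is_path V E p \<Longrightarrow> 0 < k \<Longrightarrow> is_path V E (take k p)"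
  using is_path_append_iff[of "take k p" "drop k p" V E]
  by (cases "k < length p") (auto simp: is_path_def)

lemma is_path_drop: "is_path V E p \<Longrightarrow> k < length p \<Longrightarrow> is_path V E (drop k p)"
  using is_path_append_iff[of "take k p" "drop k p" V E]
  by (cases "k = 0") (auto simp: is_path_def)

lemma is_path_rev: "symp E \<Longrightarrow> is_path V E p \<Longrightarrow> is_path V E (rev p)"
  by (auto simp: is_path_iff_successively symp_def elim: successively_mono)

lemma is_path_singleton: "v \<in> V \<Longrightarrow> is_path V E [v]"
  by (simp add: is_path_def)

lemma symp_if_simple_graph: "simple_graph V E \<Longrightarrow> symp E"
  by (simp add: simple_graph_def symp_def)

lemma finite_paths: "finite V \<Longrightarrow> finite {p. is_path V E p}"
  by (rule finite_subset[OF _ finite_subset_distinct]) (auto simp: is_path_def)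

lemma length_path_le_card: "finite V \<Longrightarrow> is_path V E p \<Longrightarrow> length p \<le> card V"
  by (metis card_mono distinct_card is_path_def)

lemma length_le_tau:
  assumes "finite V" "is_path V E p" "hd p = v \<or> last p = v"
  shows "length p \<le> tau V E v"
  unfolding tau_def
  by (rule Max_ge) (use assms finite_paths[OF assms(1), of E] in auto)

lemma tau_le_tauG:
  assumes "finite V" "v \<in> V"
  shows "tau V E v \<le> tauG V E"
  unfolding tau_def tauG_def
proof (rule Max_mono)
  have "is_path V E [v]"
    using assms(2) by (rule is_path_singleton)
  then show "{length p |p. is_path V E p \<and> (hd p = v \<or> last p = v)} \<noteq> {}"
    by force
  show "finite {length p |p. is_path V E p}"
    using finite_paths[OF assms(1), of E] by simp
qed auto

lemma longest_path_exists:
  assumes "finite V" "V \<noteq> {}"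
  obtains p where "is_path V E p" "length p = tauG V E"
proof -
  obtain v where "v \<in> V"
    using assms(2) by blast
  then have "is_path V E [v]"
    by (rule is_path_singleton)
  then have "tauG V E \<in> {length p |p. is_path V E p}"
    unfolding tauG_def using finite_paths[OF assms(1), of E] by (intro Max_in) auto
  then show thesis
    using that by auto
qed

lemma tau_nth_path_ge:
  assumes "finite V" "is_path V E p" "i < length p"
  shows "Suc i \<le> tau V E (p ! i)" "length p - i \<le> tau V E (p ! i)"
proof -
  have "is_path V E (take (Suc i) p)"
    using assms(2) by (rule is_path_take) simp
  moreover have "last (take (Suc i) p) = p ! i"
    using assms(3) by (simp add: take_Suc_conv_app_nth)
  ultimately
  show "Suc i \<le> tau V E (p ! i)"
    using length_le_tau[OF assms(1)] assms(3) by fastforce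
  have "is_path V E (drop i p)" "hd (drop i p) = p ! i"
    using assms by (simp_all add: is_path_drop hd_drop_conv_nth)
  then show "length p - i \<le> tau V E (p ! i)"
    using length_le_tau[OF assms(1)] by fastforce
qed

lemma path_ending_next_to_set:
  assumes "connected_graph V E" "v \<in> V" "v \<notin> S" "w \<in> V" "w \<in> S"
  obtains a u where "is_path V E a" "hd a = v" "set a \<inter> S = {}" "u \<in> S" "E (last a) u"
proof -
  obtain q where q: "is_path V E q" "hd q = v" "last q = w"
    using assms unfolding connected_graph_def by blast
  define a where "a = takeWhile (\<lambda>x. x \<notin> S) q"
  define r where "r = dropWhile (\<lambda>x. x \<notin> S) q"
  have "q \<noteq> []"
    using q(1) by (simp add: is_path_def)
  then have "a \<noteq> []"
    using q(2) assms(3) by (cases q) (auto simp: a_def)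
  have "r \<noteq> []"
    using \<open>q \<noteq> []\<close> q(3) assms(5) by (auto simp: r_def)
  then have "hd r \<in> S"
    unfolding r_def using hd_dropWhile by blast
  have "is_path V E (a @ r)"
    using q(1) by (simp add: a_def r_def)
  then have "is_path V E a" "E (last a) (hd r)"
    using is_path_append_iff[OF \<open>a \<noteq> []\<close> \<open>r \<noteq> []\<close>] by auto
  moreover have "hd a = v"
    using q(2) assms(3) \<open>q \<noteq> []\<close> by (cases q) (auto simp: a_def)
  moreover have "set a \<inter> S = {}"
    by (auto simp: a_def dest: set_takeWhileD)
  ultimately show thesis
    using that \<open>hd r \<in> S\<close> by blast
qed

lemma tau_off_path_ge:
  assumes "simple_graph V E" "connected_graph V E" "is_path V E p" "v \<in> V" "v \<notin> set p"
  shows "length p + 3 \<le> 2 * tau V E v"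
proof -
  have fin: "finite V"
    using assms(1) by (simp add: simple_graph_def)
  have "p \<noteq> []" "set p \<subseteq> V"
    using assms(3) by (simp_all add: is_path_def)
  then have "hd p \<in> V \<inter> set p"
    by auto
  then obtain a u where a: "is_path V E a" "hd a = v" "set a \<inter> set p = {}"
    and "u \<in> set p" "E (last a) u"
    using path_ending_next_to_set[OF assms(2,4,5)] by blast
  then obtain i where i: "i < length p" "u = p ! i"
    by (metis in_set_conv_nth)
  have "a \<noteq> []"
    using a(1) by (simp add: is_path_def)
  have "is_path V E (drop i p)"
    using assms(3) i(1) by (rule is_path_drop)
  moreover have "set (drop i p) \<subseteq> set p"
    by (rule set_drop_subset)
  moreover have "drop i p \<noteq> []"
    using i(1) by simp
  ultimately have "is_path V E (a @ drop i p)"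
    using a \<open>E (last a) u\<close> i
    by (auto simp: is_path_append_iff[OF \<open>a \<noteq> []\<close>] hd_drop_conv_nth)
  then have to_end: "length a + (length p - i) \<le> tau V E v"
    using length_le_tau[OF fin] a(2) \<open>a \<noteq> []\<close> by fastforce
  have "is_path V E (take (Suc i) p)"
    using assms(3) by (rule is_path_take) simp
  moreover have "take (Suc i) p \<noteq> []" "last (take (Suc i) p) = p ! i"
    using i(1) by (simp_all add: take_Suc_conv_app_nth)
  moreover have "is_path V E (rev a)"
    using is_path_rev[OF symp_if_simple_graph[OF assms(1)] a(1)] .
  moreover have "set (take (Suc i) p) \<subseteq> set p"
    by (rule set_take_subset)
  moreover have "E (p ! i) (last a)"
    using \<open>E (last a) u\<close> i(2) symp_if_simple_graph[OF assms(1)] by (simp add: sympD)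
  ultimately have "is_path V E (take (Suc i) p @ rev a)"
    using a(3) \<open>a \<noteq> []\<close> by (auto simp: is_path_append_iff hd_rev)
  then have to_start: "Suc i + length a \<le> tau V E v"
    using length_le_tau[OF fin] a(2) \<open>a \<noteq> []\<close> i(1) by (fastforce simp: last_rev)
  show ?thesis
    using to_end to_start i(1) \<open>a \<noteq> []\<close> by (cases a) auto
qed

lemma off_centre_index_bound:
  fixes i L t :: nat
  assumes "i < L" "\<not> (odd L \<and> i = L div 2)" "Suc i \<le> t" "L - i \<le> t"
  shows "L + 2 \<le> 2 * t"
  using assms by arith

lemma tau_ge_half_path:
  assumes "simple_graph V E" "connected_graph V E" "is_path V E p" "v \<in> V"
    and "\<not> (odd (length p) \<and> v = p ! (length p div 2))"
  shows "length p + 2 \<le> 2 * tau V E v"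
proof (cases "v \<in> set p")
  case True
  then obtain i where i: "i < length p" "v = p ! i"
    by (metis in_set_conv_nth)
  moreover have "finite V"
    using assms(1) by (simp add: simple_graph_def)
  ultimately have "Suc i \<le> tau V E v" "length p - i \<le> tau V E v"
    using tau_nth_path_ge assms(3) by blast+
  moreover have "\<not> (odd (length p) \<and> i = length p div 2)"
    using assms(5) i(2) by blast
  ultimately show ?thesis
    using i(1) by (intro off_centre_index_bound)
next
  case False
  then show ?thesis
    using tau_off_path_ge[OF assms(1-4)] by simp
qed

lemma card_le_card_tau_ge_half_path:
  assumes "simple_graph V E" "connected_graph V E" "is_path V E p"
  shows "card V \<le> card {v \<in> V. length p + 2 \<le> 2 * tau V E v} + length p mod 2"
proof -
  let ?S = "{v \<in> V. length p + 2 \<le> 2 * tau V E v}"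
  have "finite ?S"
    using assms(1) by (simp add: simple_graph_def)
  show ?thesis
  proof (cases "even (length p)")
    case True
    then have "V \<subseteq> ?S"
      using tau_ge_half_path[OF assms] by blast
    then have "card V \<le> card ?S"
      by (rule card_mono[OF \<open>finite ?S\<close>])
    then show ?thesis
      by linarith
  next
    case False
    let ?m = "p ! (length p div 2)"
    have "V - {?m} \<subseteq> ?S"
      using tau_ge_half_path[OF assms] by blast
    then have "card (V - {?m}) \<le> card ?S"
      by (rule card_mono[OF \<open>finite ?S\<close>])
    moreover have "card V - 1 \<le> card (V - {?m})"
      using diff_card_le_card_Diff[of "{?m}" V] by simp
    moreover have "length p mod 2 = 1"
      using False by presburger
    ultimately show ?thesis
      by arith
  qed
qed

lemma card_le_card_mult_card_fibre:
  assumes "finite A" "finite K" "f ` A \<subseteq> K"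
  obtains k where "card A \<le> card K * card {a \<in> A. f a = k}"
proof (cases "K = {}")
  case True
  then show thesis
    using assms(3) that by simp
next
  case False
  let ?fibre = "\<lambda>k. card {a \<in> A. f a = k}"
  have "Max (?fibre ` K) \<in> ?fibre ` K"
    using assms(2) False by (intro Max_in) auto
  then obtain k where "?fibre k = Max (?fibre ` K)"
    by force
  then have fibre_le: "?fibre k' \<le> ?fibre k" if "k' \<in> K" for k'
    using assms(2) that by simp
  have "card A = (\<Sum>k\<in>K. ?fibre k)"
    using sum.group[OF assms, of "\<lambda>_. 1 :: nat"] by simp
  also have "\<dots> \<le> card K * ?fibre k"
    using sum_bounded_above[of K ?fibre "?fibre k"] fibre_le by simp
  finally show thesis
    by (rule that)
qed

lemma card_upper_half: "card {k. L + 2 \<le> 2 * k \<and> k \<le> L} = L div 2"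
proof -
  have "{k. L + 2 \<le> 2 * k \<and> k \<le> L} = {(L + 3) div 2..L}"
    by (auto; presburger)
  then show ?thesis
    by simp
qed

lemma two_mul_le_of_half_bound:
  fixes n a L c :: nat
  assumes "n \<le> a + L mod 2" "a \<le> L div 2 * c" "L \<le> n" "1 < n"
  shows "2 * n \<le> L * c"
proof (cases "even L")
  case True
  then show ?thesis
    using assms(1,2) by (auto elim!: evenE)
next
  case False
  then obtain h where L: "L = 2 * h + 1"
    by (metis oddE)
  then have half: "L div 2 = h"
    by simp
  have "2 \<le> c"
  proof (rule ccontr)
    assume "\<not> 2 \<le> c"
    then have "h * c \<le> h"
      using mult_le_mono2[of c 1 h] by linarith
    then have "a \<le> h"
      using assms(2) unfolding half by linarith
    then show False
      using assms L by simp
  qed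
  then show ?thesis
    using assms(1,2) L by (simp add: algebra_simps)
qed

lemma ceiling_divide_le:
  fixes a b c :: nat
  assumes "a \<le> b * c"
  shows "\<lceil>real a / real b\<rceil> \<le> int c"
proof (cases "b = 0")
  case False
  then have "real a / real b \<le> real c"
    using assms by (simp add: divide_le_eq mult.commute of_nat_mult[symmetric] del: of_nat_mult)
  then show ?thesis
    by (simp add: ceiling_le_iff)
qed simp

theorem theorem1p7:
  fixes V :: "'a set" and E :: "'a \<Rightarrow> 'a \<Rightarrow> bool" and n :: nat
  assumes "simple_graph V E" and "connected_graph V E"
    and "card V = n" and "n > 1"
  shows "\<exists>k. of_nat (card {v \<in> V. tau V E v = k})
              \<ge> \<lceil>2 * real n / real (tauG V E)\<rceil>"
proof -
  let ?L = "tauG V E" and ?K = "{j. tauG V E + 2 \<le> 2 * j \<and> j \<le> tauG V E}"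
  have fin: "finite V"
    using assms(1) by (simp add: simple_graph_def)
  have "V \<noteq> {}"
    using assms(3,4) by auto
  then obtain P where P: "is_path V E P" "length P = ?L"
    using longest_path_exists[OF fin] by blast
  define A where "A = {v \<in> V. ?L + 2 \<le> 2 * tau V E v}"
  have "finite A" "finite ?K"
    using fin by (simp_all add: A_def)
  moreover have "tau V E ` A \<subseteq> ?K"
    using tau_le_tauG[OF fin] by (auto simp: A_def)
  ultimately obtain k where "card A \<le> card ?K * card {v \<in> A. tau V E v = k}"
    by (rule card_le_card_mult_card_fibre)
  also have "\<dots> \<le> ?L div 2 * card {v \<in> V. tau V E v = k}"
    unfolding card_upper_half using fin by (intro mult_le_mono2 card_mono) (auto simp: A_def)
  finally have "card A \<le> ?L div 2 * card {v \<in> V. tau V E v = k}" .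
  moreover have "n \<le> card A + ?L mod 2"
    using card_le_card_tau_ge_half_path[OF assms(1,2) P(1)] P(2) assms(3) by (simp add: A_def)
  moreover have "?L \<le> n"
    using length_path_le_card[OF fin P(1)] P(2) assms(3) by simp
  ultimately have "2 * n \<le> ?L * card {v \<in> V. tau V E v = k}"
    using assms(4) by (intro two_mul_le_of_half_bound)
  then show ?thesis
    using ceiling_divide_le by fastforce
qed

end
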